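(* Let $\mathcal{A}=(Q,A,\delta,q_0,F)$ be a semi-flower automaton and let $b\in A$. If the cycle formed by the $b$-edges of $\mathcal{A}$ has length $1$, then $\mathcal{A}$ is synchronizing.
   Context: An automaton over a finite alphabet $A$ is a quintuple $\mathcal{A}=(Q,A,\delta,q_0,F)$ with $Q$ a non-empty finite set of states, initial state $q_0\in Q$, set of final states $F\subseteq Q$, and total transition function $\delta:Q\times A\to Q$, extended to words in the usual way. Its digraph has vertex set $Q$ and, for each $p\in Q$, $a\in A$, an edge labeled $a$ (an $a$-edge) from $p$ to $\delta(p,a)$. A path is an alternating sequence of distinct vertices and edges, each edge going from the preceding vertex to the next; a cycle is a path with at least one edge whose initial and terminal vertices coincide. A state $q$ is accessible if there is a path from $q_0$ to $q$, and co-accessible if there is a path from $q$ to a final state. $\mathcal{A}$ is a semi-flower automaton if $F=\{q_0\}$, every state is accessible and co-accessible, and every cycle passes through $q_0$. In a semi-flower automaton, the sub-digraph formed by the $b$-edges (for a fixed letter $b$) contains exactly one cycle, called the $b$-cycle. $\mathcal{A}$ is synchronizing if there is a word $w\in A^*$ such that $\{\delta(q,w): q\in Q\}$ is a singleton. *)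

theory Defs
  imports Main
begin

definition automaton :: "'q set \<Rightarrow> 'a set \<Rightarrow> ('q \<Rightarrow> 'a \<Rightarrow> 'q) \<Rightarrow> 'q \<Rightarrow> 'q set \<Rightarrow> bool" where
  "automaton Q A \<delta> q0 F \<longleftrightarrow> finite Q \<and> Q \<noteq> {} \<and> finite A \<and> q0 \<in> Q \<and> F \<subseteq> Q
     \<and> (\<forall>p\<in>Q. \<forall>a\<in>A. \<delta> p a \<in> Q)"

definition delta_star :: "('q \<Rightarrow> 'a \<Rightarrow> 'q) \<Rightarrow> 'q \<Rightarrow> 'a list \<Rightarrow> 'q" where
  "delta_star \<delta> q w = foldl \<delta> q w"

definition is_walk :: "'q set \<Rightarrow> 'a set \<Rightarrow> ('q \<Rightarrow> 'a \<Rightarrow> 'q) \<Rightarrow> 'q list \<Rightarrow> 'a list \<Rightarrow> bool" where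
  "is_walk Q A \<delta> vs ws \<longleftrightarrow> length vs = Suc (length ws) \<and> set vs \<subseteq> Q \<and> set ws \<subseteq> A
     \<and> (\<forall>i < length ws. \<delta> (vs ! i) (ws ! i) = vs ! Suc i)"

definition is_path :: "'q set \<Rightarrow> 'a set \<Rightarrow> ('q \<Rightarrow> 'a \<Rightarrow> 'q) \<Rightarrow> 'q list \<Rightarrow> 'a list \<Rightarrow> bool" where
  "is_path Q A \<delta> vs ws \<longleftrightarrow> is_walk Q A \<delta> vs ws \<and> distinct vs"

definition is_cycle :: "'q set \<Rightarrow> 'a set \<Rightarrow> ('q \<Rightarrow> 'a \<Rightarrow> 'q) \<Rightarrow> 'q list \<Rightarrow> 'a list \<Rightarrow> bool" where
  "is_cycle Q A \<delta> vs ws \<longleftrightarrow> is_walk Q A \<delta> vs ws \<and> ws \<noteq> [] \<and> hd vs = last vs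
     \<and> distinct (butlast vs)"

definition accessible :: "'q set \<Rightarrow> 'a set \<Rightarrow> ('q \<Rightarrow> 'a \<Rightarrow> 'q) \<Rightarrow> 'q \<Rightarrow> 'q \<Rightarrow> bool" where
  "accessible Q A \<delta> q0 q \<longleftrightarrow> (\<exists>vs ws. is_path Q A \<delta> vs ws \<and> hd vs = q0 \<and> last vs = q)"

definition coaccessible :: "'q set \<Rightarrow> 'a set \<Rightarrow> ('q \<Rightarrow> 'a \<Rightarrow> 'q) \<Rightarrow> 'q set \<Rightarrow> 'q \<Rightarrow> bool" where
  "coaccessible Q A \<delta> F q \<longleftrightarrow> (\<exists>vs ws. is_path Q A \<delta> vs ws \<and> hd vs = q \<and> last vs \<in> F)"

definition semi_flower :: "'q set \<Rightarrow> 'a set \<Rightarrow> ('q \<Rightarrow> 'a \<Rightarrow> 'q) \<Rightarrow> 'q \<Rightarrow> 'q set \<Rightarrow> bool" where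
  "semi_flower Q A \<delta> q0 F \<longleftrightarrow> automaton Q A \<delta> q0 F \<and> F = {q0}
     \<and> (\<forall>q\<in>Q. accessible Q A \<delta> q0 q \<and> coaccessible Q A \<delta> F q)
     \<and> (\<forall>vs ws. is_cycle Q A \<delta> vs ws \<longrightarrow> q0 \<in> set vs)"

definition synchronizing :: "'q set \<Rightarrow> 'a set \<Rightarrow> ('q \<Rightarrow> 'a \<Rightarrow> 'q) \<Rightarrow> bool" where
  "synchronizing Q A \<delta> \<longleftrightarrow> (\<exists>w \<in> lists A. \<exists>p. (\<lambda>q. delta_star \<delta> q w) ` Q = {p})"

end

theory Submission
  imports Defs
begin

text \<open>Iterating the letter \<open>b\<close> from any state, the orbit under \<open>p \<mapsto> \<delta> p b\<close> runs
  into a repetition within \<open>card Q\<close> steps, and its periodic part is a cycle of \<open>b\<close>-edges.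
  By hypothesis that cycle is a loop, and in a semi-flower automaton every cycle passes
  through \<open>q0\<close>, so the loop sits at \<open>q0\<close>. Hence \<open>b\<^bsup>card Q\<^esup>\<close> sends every state to \<open>q0\<close>.\<close>

lemma foldl_replicate_funpow: "foldl \<delta> q (replicate n b) = ((\<lambda>p. \<delta> p b) ^^ n) q"
  by (induction n arbitrary: q) (simp_all add: funpow_Suc_right del: funpow.simps)

lemma funpow_in_closed_set:
  assumes "f ` S \<subseteq> S" "q \<in> S"
  shows "(f ^^ k) q \<in> S"
  using assms by (induction k) auto

lemma funpow_first_repetition:
  assumes "finite S" "f ` S \<subseteq> S" "q \<in> S"
  obtains i j where "i < j" "j \<le> card S" "(f ^^ i) q = (f ^^ j) q"
    "inj_on (\<lambda>k. (f ^^ k) q) {..<j}"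
proof -
  let ?g = "\<lambda>k. (f ^^ k) q"
  define repeats where "repeats j \<longleftrightarrow> (\<exists>i<j. ?g i = ?g j)" for j
  have "card (?g ` {..card S}) \<le> card S"
    using funpow_in_closed_set[OF assms(2,3)] by (intro card_mono[OF assms(1)]) auto
  then have "\<not> inj_on ?g {..card S}"
    by (intro pigeonhole) simp
  then obtain a c where "a < c" "c \<le> card S" "?g a = ?g c"
    unfolding inj_on_def by (metis atMost_iff linorder_neqE_nat)
  then have "repeats c"
    unfolding repeats_def by blast
  define j where "j = (LEAST j. repeats j)"
  have "repeats j"
    unfolding j_def using \<open>repeats c\<close> by (rule LeastI)
  then obtain i where "i < j" "?g i = ?g j"
    unfolding repeats_def by blast
  moreover have "j \<le> card S"
    using Least_le[of repeats, OF \<open>repeats c\<close>] \<open>c \<le> card S\<close> unfolding j_def by simp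
  moreover have "inj_on ?g {..<j}"
  proof (rule inj_onI, rule ccontr)
    fix x y assume "x \<in> {..<j}" "y \<in> {..<j}" "?g x = ?g y" "x \<noteq> y"
    then have "repeats (max x y)"
      unfolding repeats_def by (cases x y rule: linorder_cases) (auto simp: max_def)
    then have "j \<le> max x y"
      unfolding j_def by (rule Least_le)
    with \<open>x \<in> {..<j}\<close> \<open>y \<in> {..<j}\<close> show False
      by simp
  qed
  ultimately show thesis
    using that by blast
qed

lemma is_walk_letter_orbit:
  assumes "b \<in> A" "\<forall>p\<in>Q. \<delta> p b \<in> Q" "p \<in> Q"
  shows "is_walk Q A \<delta> (map (\<lambda>k. ((\<lambda>q. \<delta> q b) ^^ k) p) [0..<Suc m]) (replicate m b)"
proof -
  have "((\<lambda>q. \<delta> q b) ^^ k) p \<in> Q" for k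
    using assms(2,3) by (intro funpow_in_closed_set) auto
  then show ?thesis
    unfolding is_walk_def using assms(1) by (auto simp del: upt_Suc)
qed

lemma is_cycle_letter_orbit:
  assumes "b \<in> A" "\<forall>p\<in>Q. \<delta> p b \<in> Q" "p \<in> Q" "0 < m"
    and "((\<lambda>q. \<delta> q b) ^^ m) p = p"
    and "inj_on (\<lambda>k. ((\<lambda>q. \<delta> q b) ^^ k) p) {..<m}"
  shows "is_cycle Q A \<delta> (map (\<lambda>k. ((\<lambda>q. \<delta> q b) ^^ k) p) [0..<Suc m]) (replicate m b)"
proof -
  have "butlast (map (\<lambda>k. ((\<lambda>q. \<delta> q b) ^^ k) p) [0..<Suc m])
      = map (\<lambda>k. ((\<lambda>q. \<delta> q b) ^^ k) p) [0..<m]"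
    by (simp add: map_butlast[symmetric])
  moreover have "distinct (map (\<lambda>k. ((\<lambda>q. \<delta> q b) ^^ k) p) [0..<m])"
    using assms(6) by (simp add: distinct_map lessThan_atLeast0)
  ultimately show ?thesis
    unfolding is_cycle_def using is_walk_letter_orbit[where \<delta>=\<delta> and b=b and p=p and m=m, OF assms(1-3)] assms(4,5)
    by (simp add: hd_map last_map del: upt_Suc)
qed

lemma semi_flower_letter_power_card:
  assumes sf: "semi_flower Q A \<delta> q0 F" and "b \<in> A"
    and loops: "\<forall>vs ws. is_cycle Q A \<delta> vs ws \<and> set ws \<subseteq> {b} \<longrightarrow> length ws = 1"
    and "q \<in> Q"
  shows "((\<lambda>p. \<delta> p b) ^^ card Q) q = q0"
proof -
  let ?f = "\<lambda>p. \<delta> p b"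
  have "finite Q" and closed: "\<forall>p\<in>Q. \<delta> p b \<in> Q"
    and through_q0: "\<And>vs ws. is_cycle Q A \<delta> vs ws \<Longrightarrow> q0 \<in> set vs"
    using sf \<open>b \<in> A\<close> unfolding semi_flower_def automaton_def by auto
  then have "?f ` Q \<subseteq> Q"
    by auto
  then obtain i j where "i < j" "j \<le> card Q" "(?f ^^ i) q = (?f ^^ j) q"
    and inj: "inj_on (\<lambda>k. (?f ^^ k) q) {..<j}"
    using funpow_first_repetition[OF \<open>finite Q\<close> _ \<open>q \<in> Q\<close>] by blast
  define p where "p = (?f ^^ i) q"
  have orbit_p: "(?f ^^ k) p = (?f ^^ (k + i)) q" for k
    unfolding p_def by (simp add: funpow_add)
  have "p \<in> Q"
    unfolding p_def using \<open>?f ` Q \<subseteq> Q\<close> \<open>q \<in> Q\<close> by (rule funpow_in_closed_set)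
  moreover have "(?f ^^ (j - i)) p = p"
    using orbit_p \<open>i < j\<close> \<open>(?f ^^ i) q = (?f ^^ j) q\<close> by (simp add: p_def)
  moreover have "inj_on (\<lambda>k. (?f ^^ k) p) {..<j - i}"
    using inj unfolding orbit_p inj_on_def by fastforce
  ultimately have cycle: "is_cycle Q A \<delta> (map (\<lambda>k. (?f ^^ k) p) [0..<Suc (j - i)])
      (replicate (j - i) b)"
    using is_cycle_letter_orbit[where \<delta>=\<delta> and b=b and Q=Q, OF \<open>b \<in> A\<close> closed] \<open>i < j\<close>
    by simp
  moreover have "set (replicate (j - i) b) \<subseteq> {b}"
    by auto
  ultimately have "length (replicate (j - i) b) = 1"
    using loops by blast
  then have "j - i = 1"
    by simp
  with \<open>(?f ^^ (j - i)) p = p\<close> have "?f p = p"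
    by simp
  moreover have "q0 \<in> set (map (\<lambda>k. (?f ^^ k) p) [0..<Suc (j - i)])"
    using through_q0[OF cycle] .
  ultimately have "p = q0"
    using \<open>j - i = 1\<close> by auto
  with \<open>?f p = p\<close> have "(?f ^^ (k + i)) q = q0" for k
    by (induction k) (simp_all add: p_def)
  from this[of "card Q - i"] show ?thesis
    using \<open>i < j\<close> \<open>j \<le> card Q\<close> by simp
qed

theorem mainTheorem2:
  fixes Q :: "'q set" and A :: "'a set" and \<delta> :: "'q \<Rightarrow> 'a \<Rightarrow> 'q" and q0 :: 'q and F :: "'q set"
    and b :: 'a
  assumes "semi_flower Q A \<delta> q0 F"
    and "b \<in> A"
    and "\<forall>vs ws. is_cycle Q A \<delta> vs ws \<and> set ws \<subseteq> {b} \<longrightarrow> length ws = 1"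
  shows "synchronizing Q A \<delta>"
proof -
  have "q0 \<in> Q"
    using assms(1) unfolding semi_flower_def automaton_def by simp
  moreover have "delta_star \<delta> q (replicate (card Q) b) = q0" if "q \<in> Q" for q
    unfolding delta_star_def foldl_replicate_funpow
    using semi_flower_letter_power_card[OF assms that] .
  ultimately have "(\<lambda>q. delta_star \<delta> q (replicate (card Q) b)) ` Q = {q0}"
    by auto
  moreover have "replicate (card Q) b \<in> lists A"
    using assms(2) by auto
  ultimately show ?thesis
    unfolding synchronizing_def by blast
qed

end
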